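(* Let $\psi$ be admissible, let $Q$ be a $\partial_\psi$-delta operator with $\partial_\psi$-basic polynomial sequence $(p_n)_{n\ge0}$, and let $S\in\Sigma_\psi$ be invertible with $Q=\partial_\psi S$. Then for every $n>0$: (1) $p_n(x)=Q'\,S^{-n-1}x^n$; (2) $p_n(x)=S^{-n}x^n-\frac{n_\psi}{n}\,(S^{-n})'\,x^{n-1}$; (3) $p_n(x)=\frac{n_\psi}{n}\,\hat x_\psi\, S^{-n}x^{n-1}$; (4) $Q'$ is invertible and $p_n(x)=\frac{n_\psi}{n}\,\hat x_\psi\,(Q')^{-1}p_{n-1}(x)$ (the $\psi$-Rodrigues formula).
   Context: $\mathbf F$ is a field of characteristic zero and $P=\mathbf F[x]$; $\mathrm{End}(P)$ is the algebra of linear operators on $P$. An admissible sequence is $\psi=(\psi_n)_{n\ge0}$ with $\psi_n\in\mathbf F$, $\psi_0=1$, $\psi_n\neq0$; $n_\psi=\psi_{n-1}/\psi_n$ ($n\ge1$), $0_\psi=0$, $n_\psi!=n_\psi(n-1)_\psi\cdots1_\psi$, $0_\psi!=1$. The $\psi$-derivative is $\partial_\psi x^n=n_\psi x^{n-1}$. For $y\in\mathbf F$, $E^y(\partial_\psi)=\sum_{k\ge0}\frac{y^k}{k_\psi!}\partial_\psi^{\,k}$. $\Sigma_\psi=\{T\in\mathrm{End}(P):[T,E^\alpha(\partial_\psi)]=0\ \forall\alpha\in\mathbf F\}$. A $\partial_\psi$-delta operator is $Q\in\Sigma_\psi$ with $Q(x)$ a nonzero constant. Its $\partial_\psi$-basic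 polynomial sequence is the sequence $(p_n)_{n\ge0}$ with $\deg p_n=n$, $p_0=1$, $p_n(0)=0$ for $n>0$, and $Qp_n=n_\psi p_{n-1}$. The operator $\hat x_\psi$ is the linear map on $P$ with $\hat x_\psi x^n=\frac{n+1}{(n+1)_\psi}x^{n+1}$ ($n\ge0$). The Pincherle $\psi$-derivative of $T\in\Sigma_\psi$ is $T'=T\hat x_\psi-\hat x_\psi T$. *)

theory Defs
  imports "HOL-Computational_Algebra.Polynomial"
begin

definition lin_op :: "('a::field poly \<Rightarrow> 'a poly) \<Rightarrow> bool" where
  "lin_op T \<longleftrightarrow> (\<forall>p q. T (p + q) = T p + T q) \<and> (\<forall>c p. T (smult c p) = smult c (T p))"

definition admissible :: "(nat \<Rightarrow> 'a::field) \<Rightarrow> bool" where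
  "admissible psi \<longleftrightarrow> psi 0 = 1 \<and> (\<forall>n. psi n \<noteq> 0)"

definition psi_num :: "(nat \<Rightarrow> 'a::field) \<Rightarrow> nat \<Rightarrow> 'a" where
  "psi_num psi n = (if n = 0 then 0 else psi (n - 1) / psi n)"

definition psi_fact :: "(nat \<Rightarrow> 'a::field) \<Rightarrow> nat \<Rightarrow> 'a" where
  "psi_fact psi n = (\<Prod>k\<in>{1..n}. psi_num psi k)"

definition psi_deriv :: "(nat \<Rightarrow> 'a::field) \<Rightarrow> 'a poly \<Rightarrow> 'a poly" where
  "psi_deriv psi p = (\<Sum>k\<le>degree p. monom (psi_num psi k * coeff p k) (k - 1))"

text \<open>E^y(d_psi) = sum_k y^k/k_psi! d_psi^k; on a polynomial p only the
  terms k <= degree p are nonzero, so the sum is finite.\<close>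
definition psi_exp :: "(nat \<Rightarrow> 'a::field) \<Rightarrow> 'a \<Rightarrow> 'a poly \<Rightarrow> 'a poly" where
  "psi_exp psi y p = (\<Sum>k\<le>degree p. smult (y ^ k / psi_fact psi k) ((psi_deriv psi ^^ k) p))"

definition Sigma_psi :: "(nat \<Rightarrow> 'a::field) \<Rightarrow> ('a poly \<Rightarrow> 'a poly) set" where
  "Sigma_psi psi = {T. lin_op T \<and> (\<forall>\<alpha>. T \<circ> psi_exp psi \<alpha> = psi_exp psi \<alpha> \<circ> T)}"

definition psi_delta :: "(nat \<Rightarrow> 'a::field) \<Rightarrow> ('a poly \<Rightarrow> 'a poly) \<Rightarrow> bool" where
  "psi_delta psi Q \<longleftrightarrow> Q \<in> Sigma_psi psi \<and> (\<exists>c. c \<noteq> 0 \<and> Q [:0, 1:] = [:c:])"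

definition psi_basic_seq :: "(nat \<Rightarrow> 'a::field) \<Rightarrow> ('a poly \<Rightarrow> 'a poly) \<Rightarrow> (nat \<Rightarrow> 'a poly) \<Rightarrow> bool" where
  "psi_basic_seq psi Q p \<longleftrightarrow>
     (\<forall>n. degree (p n) = n) \<and> p 0 = 1 \<and> (\<forall>n>0. poly (p n) 0 = 0) \<and>
     (\<forall>n>0. Q (p n) = smult (psi_num psi n) (p (n - 1)))"

definition xhat :: "(nat \<Rightarrow> 'a::field) \<Rightarrow> 'a poly \<Rightarrow> 'a poly" where
  "xhat psi p = (\<Sum>k\<le>degree p. monom (of_nat (k + 1) / psi_num psi (k + 1) * coeff p k) (k + 1))"

definition pincherle :: "(nat \<Rightarrow> 'a::field) \<Rightarrow> ('a poly \<Rightarrow> 'a poly) \<Rightarrow> 'a poly \<Rightarrow> 'a poly" where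
  "pincherle psi T = (\<lambda>p. T (xhat psi p) - xhat psi (T p))"

end

theory Submission
  imports Defs
begin

(* Write D for the psi-derivative and X for the operator xhat_psi.  The proof
   rests on three facts.
   (a) Every operator in Sigma_psi is "shift-invariant": linear and commuting
       with D.  Such an operator T is determined by the constants
       coeff (T x^n) 0, through a psi-binomial expansion of T x^n; consequently
       shift-invariant operators commute with each other, lower no degree
       bound, and are bijective as soon as T 1 is a nonzero constant.
   (b) D X - X D = id, so the Pincherle derivative T' = T X - X T obeys the
       calculus D' = id, (T U)' = T U' + T' U, (R^(m+1))' = (m+1) R^m R' and
       (S^-1)' = - S^-2 S'.
   (c) A psi-basic sequence of Q = D S is unique, because ker Q = constants.
   With R = S^-1 the candidate basic n = Q' R^(n+1) x^n is rewritten by (b)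
   into the forms (2) and (3); form (3) shows that it vanishes at 0, and
   commuting Q past Q' and R gives Q (basic n) = n_psi basic (n-1), so
   basic n = p_n by (c).  Finally Q' 1 = S 1 is a nonzero constant, so Q' is
   bijective by (a), and Q' R^n x^(n-1) = p_(n-1) yields the Rodrigues
   formula (4). *)

lemma coeff_psi_deriv: "coeff (psi_deriv psi p) k = psi_num psi (k + 1) * coeff p (k + 1)"
proof -
  have "coeff (psi_deriv psi p) k
      = (\<Sum>j\<le>degree p. if j = k + 1 then psi_num psi j * coeff p j else 0)"
    unfolding psi_deriv_def coeff_sum coeff_monom
    by (rule sum.cong) (auto simp: psi_num_def)
  also have "\<dots> = psi_num psi (k + 1) * coeff p (k + 1)"
    by (auto simp: coeff_eq_0)
  finally show ?thesis .
qed

lemma coeff_xhat: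
  "coeff (xhat psi p) k = (if k = 0 then 0 else of_nat k / psi_num psi k * coeff p (k - 1))"
proof (cases k)
  case 0
  then show ?thesis unfolding xhat_def coeff_sum coeff_monom by simp
next
  case (Suc m)
  have "coeff (xhat psi p) k
      = (\<Sum>j\<le>degree p. if j = m then of_nat (m + 1) / psi_num psi (m + 1) * coeff p m else 0)"
    unfolding xhat_def coeff_sum coeff_monom Suc by (rule sum.cong) auto
  also have "\<dots> = of_nat (m + 1) / psi_num psi (m + 1) * coeff p m"
    by (auto simp: coeff_eq_0)
  finally show ?thesis using Suc by simp
qed

lemma psi_deriv_monom: "psi_deriv psi (monom 1 n) = smult (psi_num psi n) (monom 1 (n - 1))"
  by (auto simp: poly_eq_iff coeff_psi_deriv coeff_monom psi_num_def)

lemma xhat_monom: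
  "xhat psi (monom 1 n) = smult (of_nat (Suc n) / psi_num psi (Suc n)) (monom 1 (Suc n))"
  by (auto simp: poly_eq_iff coeff_xhat coeff_monom)

lemma psi_deriv_xhat:
  assumes "admissible psi"
  shows "psi_deriv psi (xhat psi p) = xhat psi (psi_deriv psi p) + p"
proof -
  have "k > 0 \<Longrightarrow> psi_num psi k \<noteq> 0" for k
    using assms by (simp add: admissible_def psi_num_def)
  then show ?thesis
    by (auto simp: poly_eq_iff coeff_psi_deriv coeff_xhat field_simps of_nat_Suc)
qed

lemma lin_op_psi_deriv: "lin_op (psi_deriv psi)"
  unfolding lin_op_def by (auto simp: poly_eq_iff coeff_psi_deriv algebra_simps)

lemma lin_op_xhat: "lin_op (xhat psi)"
  unfolding lin_op_def by (auto simp: poly_eq_iff coeff_xhat algebra_simps)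

lemma lin_op_add: "lin_op T \<Longrightarrow> T (p + q) = T p + T q"
  unfolding lin_op_def by blast

lemma lin_op_smult: "lin_op T \<Longrightarrow> T (smult c p) = smult c (T p)"
  unfolding lin_op_def by blast

lemma lin_op_zero: "lin_op T \<Longrightarrow> T 0 = 0"
  using lin_op_smult[of T 0 0] by simp

lemma lin_op_minus: "lin_op T \<Longrightarrow> T (- p) = - T p"
  using lin_op_smult[of T "-1" p] by simp

lemma lin_op_diff: "lin_op T \<Longrightarrow> T (p - q) = T p - T q"
  using lin_op_add[of T p "- q"] lin_op_minus[of T q] by simp

lemma lin_op_sum: "lin_op T \<Longrightarrow> T (sum f A) = (\<Sum>a\<in>A. T (f a))"
  by (induction A rule: infinite_finite_induct) (auto simp: lin_op_zero lin_op_add)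

lemma lin_op_monom: "lin_op T \<Longrightarrow> T (monom c m) = smult c (T (monom 1 m))"
  by (metis lin_op_smult smult_monom mult.right_neutral)

lemma lin_op_comp: "lin_op T \<Longrightarrow> lin_op U \<Longrightarrow> lin_op (T \<circ> U)"
  unfolding lin_op_def by simp

lemma lin_op_pow: "lin_op T \<Longrightarrow> lin_op (T ^^ n)"
  by (induction n) (auto simp: lin_op_comp lin_op_def)

lemma lin_op_expand:
  assumes "lin_op T" "degree p \<le> N"
  shows "T p = (\<Sum>k\<le>N. smult (coeff p k) (T (monom 1 k)))"
proof -
  have "T p = T (\<Sum>k\<le>N. smult (coeff p k) (monom 1 k))"
    using poly_as_sum_of_monoms'[OF assms(2)] by (simp add: smult_monom)
  also have "\<dots> = (\<Sum>k\<le>N. smult (coeff p k) (T (monom 1 k)))"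
    using assms(1) by (simp add: lin_op_sum lin_op_smult)
  finally show ?thesis .
qed

lemma pincherle_comp:
  assumes "lin_op T"
  shows "pincherle psi (T \<circ> U) p = T (pincherle psi U p) + pincherle psi T (U p)"
  unfolding pincherle_def by (simp add: lin_op_diff[OF assms])

lemma pincherle_id: "pincherle psi id p = 0"
  unfolding pincherle_def by simp

lemma pincherle_psi_deriv: "admissible psi \<Longrightarrow> pincherle psi (psi_deriv psi) p = p"
  unfolding pincherle_def by (simp add: psi_deriv_xhat)

lemma pincherle_psi_deriv_comp:
  assumes "admissible psi"
  shows "pincherle psi (psi_deriv psi \<circ> S) p
       = psi_deriv psi (pincherle psi S p) + S p"
  by (simp add: pincherle_comp[OF lin_op_psi_deriv] pincherle_psi_deriv[OF assms])

definition shift_inv :: "(nat \<Rightarrow> 'a::field) \<Rightarrow> ('a poly \<Rightarrow> 'a poly) \<Rightarrow> bool" where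
  "shift_inv psi T \<longleftrightarrow> lin_op T \<and> (\<forall>p. T (psi_deriv psi p) = psi_deriv psi (T p))"

lemma shift_inv_lin: "shift_inv psi T \<Longrightarrow> lin_op T"
  unfolding shift_inv_def by simp

lemma shift_inv_commD: "shift_inv psi T \<Longrightarrow> T (psi_deriv psi p) = psi_deriv psi (T p)"
  unfolding shift_inv_def by simp

lemma shift_inv_psi_deriv: "shift_inv psi (psi_deriv psi)"
  unfolding shift_inv_def by (simp add: lin_op_psi_deriv)

lemma shift_inv_comp: "shift_inv psi T \<Longrightarrow> shift_inv psi U \<Longrightarrow> shift_inv psi (T \<circ> U)"
  unfolding shift_inv_def by (simp add: lin_op_comp)

lemma shift_inv_pow: "shift_inv psi T \<Longrightarrow> shift_inv psi (T ^^ n)"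
  by (induction n) (auto simp: shift_inv_comp shift_inv_def lin_op_def)

lemma shift_inv_commD_pow:
  "shift_inv psi T \<Longrightarrow> T ((psi_deriv psi ^^ k) p) = (psi_deriv psi ^^ k) (T p)"
  by (induction k) (auto simp: shift_inv_commD)

lemma shift_inv_inv:
  assumes "shift_inv psi S" "bij S"
  shows "shift_inv psi (inv S)"
proof -
  have inj: "inj S" using assms(2) bij_is_inj by blast
  have S_inv: "S (inv S p) = p" for p
    using assms(2) by (simp add: bij_is_surj surj_f_inv_f)
  have lin: "lin_op S" using assms(1) shift_inv_lin by blast
  have "lin_op (inv S)" unfolding lin_op_def
    using inj S_inv lin_op_add[OF lin] lin_op_smult[OF lin] by (metis injD)
  moreover have "inv S (psi_deriv psi p) = psi_deriv psi (inv S p)" for p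
    using inj S_inv shift_inv_commD[OF assms(1)] by (metis injD)
  ultimately show ?thesis unfolding shift_inv_def by blast
qed

lemma shift_inv_pincherle:
  assumes "admissible psi" "shift_inv psi T"
  shows "shift_inv psi (pincherle psi T)"
proof -
  let ?D = "psi_deriv psi" and ?X = "xhat psi"
  have lin: "lin_op T" using assms(2) shift_inv_lin by blast
  have "lin_op (pincherle psi T)" unfolding lin_op_def pincherle_def
    by (simp add: lin_op_add[OF lin] lin_op_add[OF lin_op_xhat] lin_op_smult[OF lin]
        lin_op_smult[OF lin_op_xhat] smult_diff_right)
  moreover have "pincherle psi T (?D p) = ?D (pincherle psi T p)" for p
  proof -
    have "?D (pincherle psi T p) = ?D (T (?X p)) - ?D (?X (T p))"
      unfolding pincherle_def by (rule lin_op_diff[OF lin_op_psi_deriv])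
    also have "\<dots> = T (?D (?X p)) - (?X (?D (T p)) + T p)"
      using shift_inv_commD[OF assms(2), of "?X p"] psi_deriv_xhat[OF assms(1), of "T p"]
      by simp
    also have "\<dots> = T (?X (?D p)) + T p - (?X (T (?D p)) + T p)"
      using shift_inv_commD[OF assms(2), of p] psi_deriv_xhat[OF assms(1), of p]
        lin_op_add[OF lin] by simp
    finally show ?thesis unfolding pincherle_def by simp
  qed
  ultimately show ?thesis unfolding shift_inv_def by blast
qed

text \<open>A vector-valued polynomial identity in the scalar a has vanishing coefficients
  (the field is infinite since it has characteristic zero).\<close>

lemma poly_identity_coeffs:
  fixes w :: "nat \<Rightarrow> 'a::field_char_0 poly"
  assumes zero: "\<And>a. (\<Sum>k\<le>N. smult (a ^ k) (w k)) = 0" and "i \<le> N"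
  shows "w i = 0"
proof -
  have "(\<Sum>k\<le>N. monom (coeff (w k) j) k) = 0" for j
  proof -
    have "poly (\<Sum>k\<le>N. monom (coeff (w k) j) k) a = coeff (\<Sum>k\<le>N. smult (a ^ k) (w k)) j" for a
      by (simp add: poly_sum poly_monom coeff_sum mult.commute)
    then show ?thesis using zero poly_all_0_iff_0 by (metis coeff_0)
  qed
  moreover have "coeff (\<Sum>k\<le>N. monom (coeff (w k) j) k) i = coeff (w i) j" for j
    using \<open>i \<le> N\<close> by (simp add: coeff_sum coeff_monom)
  ultimately have "coeff (w i) j = 0" for j
    by (metis coeff_0)
  then show ?thesis by (simp add: poly_eq_iff)
qed

context
  fixes psi :: "nat \<Rightarrow> 'a::field_char_0"
  assumes adm: "admissible psi"
begin

abbreviation D :: "'a poly \<Rightarrow> 'a poly" where "D \<equiv> psi_deriv psi"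

lemma psi_num_nonzero: "k > 0 \<Longrightarrow> psi_num psi k \<noteq> 0"
  using adm by (simp add: admissible_def psi_num_def)

lemma psi_fact_nonzero: "psi_fact psi k \<noteq> 0"
  unfolding psi_fact_def using psi_num_nonzero by (auto simp: prod_zero_iff)

lemma psi_fact_add: "psi_fact psi (m + k) = psi_fact psi m * (\<Prod>i\<in>{1..k}. psi_num psi (m + i))"
  by (induction k) (simp_all add: psi_fact_def prod.nat_ivl_Suc')

lemma psi_deriv_eq_0_iff: "D p = 0 \<longleftrightarrow> degree p = 0"
proof
  assume "D p = 0"
  then have "coeff p (Suc k) = 0" for k
    using psi_num_nonzero[of "Suc k"] by (metis Suc_eq_plus1 coeff_psi_deriv coeff_0
        mult_eq_0_iff zero_less_Suc)
  then show "degree p = 0" by (metis degree_le gr0_implies_Suc le_zero_eq)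
next
  assume "degree p = 0"
  then show "D p = 0" by (auto simp: poly_eq_iff coeff_psi_deriv coeff_eq_0)
qed

lemma coeff_psi_deriv_pow:
  "coeff ((D ^^ k) p) j = (\<Prod>i\<in>{1..k}. psi_num psi (j + i)) * coeff p (j + k)"
proof (induction k arbitrary: p)
  case 0
  then show ?case by simp
next
  case (Suc k)
  have "coeff ((D ^^ Suc k) p) j = coeff ((D ^^ k) (D p)) j"
    by (simp add: funpow_Suc_right del: funpow.simps)
  also have "\<dots> = (\<Prod>i\<in>{1..Suc k}. psi_num psi (j + i)) * coeff p (j + Suc k)"
    using Suc by (simp add: coeff_psi_deriv prod.nat_ivl_Suc')
  finally show ?case .
qed

lemma psi_exp_truncate:
  assumes "degree p \<le> N"
  shows "psi_exp psi a p = (\<Sum>k\<le>N. smult (a ^ k / psi_fact psi k) ((D ^^ k) p))"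
proof -
  have "(D ^^ k) p = 0" if "degree p < k" for k
    using that by (auto simp: poly_eq_iff coeff_psi_deriv_pow coeff_eq_0)
  then show ?thesis unfolding psi_exp_def
    by (intro sum.mono_neutral_left) (use assms in auto)
qed

text \<open>Operators commuting with every E^a(D) commute with D: compare the
  coefficients of a^1 in T E^a(D) p = E^a(D) T p.\<close>

lemma Sigma_shift_inv:
  assumes "T \<in> Sigma_psi psi"
  shows "shift_inv psi T"
proof -
  have lin: "lin_op T" and comm: "\<And>a q. T (psi_exp psi a q) = psi_exp psi a (T q)"
    using assms unfolding Sigma_psi_def by (auto simp: fun_eq_iff)
  have "T (D p) = D (T p)" for p
  proof -
    obtain N where N: "degree p \<le> N" "degree (T p) \<le> N" "1 \<le> N"
      by (meson le_add1 le_add2 le_add_same_cancel1 le_trans)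
    define w where "w k = smult (1 / psi_fact psi k) (T ((D ^^ k) p) - (D ^^ k) (T p))" for k
    have "(\<Sum>k\<le>N. smult (a ^ k) (w k)) = T (psi_exp psi a p) - psi_exp psi a (T p)" for a
      by (simp add: psi_exp_truncate[OF N(1)] psi_exp_truncate[OF N(2)] lin_op_sum[OF lin]
          lin_op_smult[OF lin] w_def sum_subtractf smult_diff_right)
    then have "w 1 = 0"
      using poly_identity_coeffs[of w N 1] comm N(3) by simp
    then show ?thesis using psi_fact_nonzero[of 1] by (simp add: w_def)
  qed
  with lin show ?thesis unfolding shift_inv_def by blast
qed

definition psi_binom :: "nat \<Rightarrow> nat \<Rightarrow> 'a" where
  "psi_binom n k = psi_fact psi n / (psi_fact psi k * psi_fact psi (n - k))"

lemma psi_binom_diag: "psi_binom n n = 1"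
proof -
  have "psi_fact psi 0 = 1" by (simp add: psi_fact_def)
  then show ?thesis by (simp add: psi_binom_def psi_fact_nonzero)
qed

lemma psi_binom_symm: "k \<le> n \<Longrightarrow> psi_binom n (n - k) = psi_binom n k"
  by (simp add: psi_binom_def mult.commute)

lemma coeff_shift_inv_monom:
  assumes "shift_inv psi T"
  shows "coeff (T (monom 1 n)) k
       = (if k \<le> n then psi_binom n k * coeff (T (monom 1 (n - k))) 0 else 0)"
proof -
  have lin: "lin_op T" using assms shift_inv_lin by blast
  define c where "c = (\<Prod>i\<in>{1..k}. psi_num psi (n - k + i))"
  have Dk_monom: "(D ^^ k) (monom 1 n) = (if k \<le> n then monom c (n - k) else 0)"
    by (auto simp: poly_eq_iff coeff_psi_deriv_pow coeff_monom c_def)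
  have "psi_fact psi k * coeff (T (monom 1 n)) k = coeff ((D ^^ k) (T (monom 1 n))) 0"
    by (simp add: coeff_psi_deriv_pow psi_fact_def)
  also have "\<dots> = coeff (T ((D ^^ k) (monom 1 n))) 0"
    by (simp add: shift_inv_commD_pow[OF assms])
  also have "\<dots> = (if k \<le> n then c * coeff (T (monom 1 (n - k))) 0 else 0)"
    unfolding Dk_monom by (simp add: lin_op_monom[OF lin, of c] lin_op_zero[OF lin])
  also have "\<dots> = (if k \<le> n then psi_fact psi n / psi_fact psi (n - k)
                      * coeff (T (monom 1 (n - k))) 0 else 0)"
    using psi_fact_add[of "n - k" k] psi_fact_nonzero[of "n - k"] by (auto simp: c_def field_simps)
  finally show ?thesis
    using psi_fact_nonzero[of k] psi_fact_nonzero[of "n - k"]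
    by (auto simp: psi_binom_def field_simps)
qed

lemma degree_shift_inv_monom: "shift_inv psi T \<Longrightarrow> degree (T (monom 1 n)) \<le> n"
  by (rule degree_le) (use coeff_shift_inv_monom[of T n] in auto)

lemma shift_inv_eqI:
  assumes "shift_inv psi T" "shift_inv psi U"
    and "\<And>n. coeff (T (monom 1 n)) 0 = coeff (U (monom 1 n)) 0"
  shows "T p = U p"
proof -
  have "T (monom 1 n) = U (monom 1 n)" for n
    using coeff_shift_inv_monom[OF assms(1), of n] coeff_shift_inv_monom[OF assms(2), of n] assms(3)
    by (simp add: poly_eq_iff)
  then show ?thesis
    using lin_op_expand[OF shift_inv_lin[OF assms(1)], of p "degree p"]
      lin_op_expand[OF shift_inv_lin[OF assms(2)], of p "degree p"] by simp
qed

lemma coeff_0_shift_inv_comp: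
  assumes "shift_inv psi T" "shift_inv psi U"
  shows "coeff (T (U (monom 1 n))) 0
       = (\<Sum>k\<in>{0..n}. psi_binom n k * coeff (U (monom 1 (n - k))) 0 * coeff (T (monom 1 k)) 0)"
proof -
  have "T (U (monom 1 n)) = (\<Sum>k\<le>n. smult (coeff (U (monom 1 n)) k) (T (monom 1 k)))"
    by (rule lin_op_expand[OF shift_inv_lin[OF assms(1)] degree_shift_inv_monom[OF assms(2)]])
  then show ?thesis
    unfolding atMost_atLeast0
    by (simp add: coeff_sum) (use coeff_shift_inv_monom[OF assms(2), of n] in simp)
qed

text \<open>Shift-invariant operators commute, since the convolution above is symmetric.\<close>

lemma shift_inv_commute:
  assumes "shift_inv psi T" "shift_inv psi U"
  shows "T (U p) = U (T p)"
proof -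
  have "coeff ((T \<circ> U) (monom 1 n)) 0 = coeff ((U \<circ> T) (monom 1 n)) 0" for n
  proof -
    have "coeff ((T \<circ> U) (monom 1 n)) 0
        = (\<Sum>k\<in>{0..n}. psi_binom n k * coeff (U (monom 1 (n - k))) 0 * coeff (T (monom 1 k)) 0)"
      using coeff_0_shift_inv_comp[OF assms] by simp
    also have "\<dots> = (\<Sum>k\<in>{0..n}. psi_binom n (n - k) * coeff (U (monom 1 (n - (n - k)))) 0
                         * coeff (T (monom 1 (n - k))) 0)"
      by (subst sum.atLeastAtMost_rev) simp
    also have "\<dots> = (\<Sum>k\<in>{0..n}. psi_binom n k * coeff (T (monom 1 (n - k))) 0
                         * coeff (U (monom 1 k)) 0)"
      by (rule sum.cong) (simp_all add: psi_binom_symm mult_ac)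
    also have "\<dots> = coeff ((U \<circ> T) (monom 1 n)) 0"
      using coeff_0_shift_inv_comp[OF assms(2,1)] by simp
    finally show ?thesis .
  qed
  then have "(T \<circ> U) p = (U \<circ> T) p"
    by (rule shift_inv_eqI[OF shift_inv_comp[OF assms] shift_inv_comp[OF assms(2,1)]])
  then show ?thesis by simp
qed

lemma shift_inv_const:
  assumes "shift_inv psi T" "degree p = 0"
  shows "degree (T p) = 0"
proof -
  have "D p = 0" using assms(2) psi_deriv_eq_0_iff by blast
  have "D (T p) = T (D p)" using shift_inv_commD[OF assms(1)] by simp
  also have "\<dots> = 0"
    using \<open>D p = 0\<close> lin_op_zero[OF shift_inv_lin[OF assms(1)]] by simp
  finally show ?thesis using psi_deriv_eq_0_iff by blast
qed

lemma coeff_shift_inv_above: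
  assumes "shift_inv psi T" "degree p \<le> d" "d \<le> k"
  shows "coeff (T p) k = (if k = d then coeff p d * coeff (T 1) 0 else 0)"
proof -
  have "T p = (\<Sum>j\<le>d. smult (coeff p j) (T (monom 1 j)))"
    by (rule lin_op_expand[OF shift_inv_lin[OF assms(1)] assms(2)])
  then have "coeff (T p) k = (\<Sum>j\<le>d. coeff p j * coeff (T (monom 1 j)) k)"
    by (simp add: coeff_sum)
  also have "\<dots> = (\<Sum>j\<le>d. if j = k then coeff p k * coeff (T 1) 0 else 0)"
  proof (rule sum.cong)
    fix j assume "j \<in> {..d}"
    then show "coeff p j * coeff (T (monom 1 j)) k = (if j = k then coeff p k * coeff (T 1) 0 else 0)"
      using coeff_shift_inv_monom[OF assms(1), of j k] assms(3) by (auto simp: psi_binom_diag)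
  qed simp
  finally show ?thesis using assms(3) by auto
qed

text \<open>Shift-invariant operators with T 1 a nonzero constant are bijective:
  they are "triangular" with nonzero diagonal.\<close>

lemma shift_inv_bij:
  assumes T: "shift_inv psi T" and c: "coeff (T 1) 0 \<noteq> 0"
  shows "bij T"
proof (rule bijI)
  have lin: "lin_op T" using T shift_inv_lin by blast
  have kernel: "r = 0" if "T r = 0" for r
    using coeff_shift_inv_above[OF T order_refl order_refl, of r] that c by simp
  show "inj T"
  proof (rule injI)
    fix p q assume "T p = T q"
    then have "T (p - q) = 0" by (simp add: lin_op_diff[OF lin])
    then show "p = q" using kernel[of "p - q"] by simp
  qed
  have "\<forall>y. (\<forall>k\<ge>d. coeff y k = 0) \<longrightarrow> (\<exists>z. T z = y)" for d
  proof (induction d)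
    case 0
    then show ?case by (metis lin_op_zero[OF lin] leading_coeff_0_iff le0)
  next
    case (Suc d)
    show ?case
    proof (intro allI impI)
      fix y :: "'a poly" assume y: "\<forall>k\<ge>Suc d. coeff y k = 0"
      define m where "m = monom (coeff y d / coeff (T 1) 0) d"
      have "coeff (y - T m) k = 0" if "k \<ge> d" for k
        using coeff_shift_inv_above[OF T _ that, of m] y c that
        by (auto simp: m_def degree_monom_le)
      then obtain z where "T z = y - T m" using Suc by blast
      then have "T (z + m) = y" by (simp add: lin_op_add[OF lin])
      then show "\<exists>z. T z = y" by blast
    qed
  qed
  then show "surj T"
    unfolding surj_def by (metis Suc_le_eq coeff_eq_0)
qed

lemma pincherle_pow:
  assumes R: "shift_inv psi R"
  shows "pincherle psi (R ^^ Suc m) y = smult (of_nat (Suc m)) ((R ^^ m) (pincherle psi R y))"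
proof (induction m arbitrary: y)
  case 0
  then show ?case by (simp add: pincherle_def)
next
  case (Suc m)
  have lin: "lin_op R" using R shift_inv_lin by blast
  let ?z = "(R ^^ Suc m) (pincherle psi R y)"
  have "pincherle psi (R ^^ Suc (Suc m)) y
      = R (pincherle psi (R ^^ Suc m) y) + pincherle psi R ((R ^^ Suc m) y)"
    using pincherle_comp[OF lin, where U = "R ^^ Suc m"] by simp
  also have "pincherle psi R ((R ^^ Suc m) y) = ?z"
    by (rule shift_inv_commute[OF shift_inv_pincherle[OF adm R] shift_inv_pow[OF R]])
  also have "R (pincherle psi (R ^^ Suc m) y) = smult (of_nat (Suc m)) ?z"
    unfolding Suc.IH by (simp add: lin_op_smult[OF lin])
  finally show ?case
    by (simp only: of_nat_Suc smult_add_left smult_1_left add_ac)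
qed

lemma pincherle_inv:
  assumes S: "shift_inv psi S" and bij: "bij S"
  shows "pincherle psi (inv S) y = - inv S (inv S (pincherle psi S y))"
proof -
  have R: "shift_inv psi (inv S)" by (rule shift_inv_inv[OF S bij])
  have "S (pincherle psi (inv S) y) + pincherle psi S (inv S y) = pincherle psi (S \<circ> inv S) y"
    using pincherle_comp[OF shift_inv_lin[OF S]] by simp
  also have "\<dots> = 0"
    using bij bij_is_surj surj_iff by (metis pincherle_id)
  finally have "S (pincherle psi (inv S) y) = - pincherle psi S (inv S y)"
    by (simp add: eq_neg_iff_add_eq_0)
  then have "pincherle psi (inv S) y = inv S (- pincherle psi S (inv S y))"
    using bij by (metis bij_is_inj inv_f_f)
  also have "pincherle psi S (inv S y) = inv S (pincherle psi S y)"
    by (rule shift_inv_commute[OF shift_inv_pincherle[OF adm S] R])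
  finally show ?thesis by (simp add: lin_op_minus[OF shift_inv_lin[OF R]])
qed

text \<open>From now on Q = D S with S shift-invariant and bijective.  The polynomials
  basic n below are the candidates for the psi-basic sequence of Q.\<close>

context
  fixes S :: "'a poly \<Rightarrow> 'a poly"
  assumes S: "shift_inv psi S" and S_bij: "bij S"
begin

definition basic :: "nat \<Rightarrow> 'a poly" where
  "basic n = pincherle psi (D \<circ> S) ((inv S ^^ (n + 1)) (monom 1 n))"

lemma inv_S_shift_inv: "shift_inv psi (inv S)"
  by (rule shift_inv_inv[OF S S_bij])

lemma S_inv_S: "S (inv S p) = p"
  using S_bij by (simp add: bij_is_surj surj_f_inv_f)

lemma inv_S_S: "inv S (S p) = p"
  using S_bij by (simp add: bij_is_inj)

lemma Q_shift_inv: "shift_inv psi (D \<circ> S)"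
  by (rule shift_inv_comp[OF shift_inv_psi_deriv S])

lemma Q'_shift_inv: "shift_inv psi (pincherle psi (D \<circ> S))"
  by (rule shift_inv_pincherle[OF adm Q_shift_inv])

lemma pincherle_inv_S_pow:
  "pincherle psi (inv S ^^ Suc m) y
     = - smult (of_nat (Suc m)) ((inv S ^^ Suc (Suc m)) (pincherle psi S y))"
proof -
  have "pincherle psi (inv S ^^ Suc m) y
      = smult (of_nat (Suc m)) ((inv S ^^ m) (- inv S (inv S (pincherle psi S y))))"
    by (simp only: pincherle_pow[OF inv_S_shift_inv] pincherle_inv[OF S S_bij])
  moreover have "(inv S ^^ Suc (Suc m)) z = (inv S ^^ m) (inv S (inv S z))" for z
    by (simp only: funpow_Suc_right comp_apply)
  ultimately show ?thesis
    by (simp only: lin_op_minus[OF lin_op_pow[OF shift_inv_lin[OF inv_S_shift_inv]]] smult_minus_right)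
qed

lemma basic_eq_form2:
  assumes "n > 0"
  shows "basic n = (inv S ^^ n) (monom 1 n)
           - smult (psi_num psi n / of_nat n) (pincherle psi (inv S ^^ n) (monom 1 (n - 1)))"
proof -
  let ?S' = "pincherle psi S" and ?R = "inv S ^^ Suc n"
  have S': "shift_inv psi ?S'" by (rule shift_inv_pincherle[OF adm S])
  have Rn: "shift_inv psi ?R" by (rule shift_inv_pow[OF inv_S_shift_inv])
  have "D (?S' (?R (monom 1 n))) = ?R (?S' (D (monom 1 n)))"
    by (simp only: shift_inv_commute[OF S' Rn] shift_inv_commD[OF Rn] shift_inv_commD[OF S'])
  also have "\<dots> = smult (psi_num psi n) (?R (?S' (monom 1 (n - 1))))"
    by (simp only: psi_deriv_monom lin_op_smult[OF shift_inv_lin[OF S']]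
        lin_op_smult[OF shift_inv_lin[OF Rn]])
  also have "\<dots> = - smult (psi_num psi n / of_nat n) (pincherle psi (inv S ^^ n) (monom 1 (n - 1)))"
    using assms pincherle_inv_S_pow[of "n - 1" "monom 1 (n - 1)"] by simp
  finally show ?thesis
    unfolding basic_def by (simp add: pincherle_psi_deriv_comp[OF adm] S_inv_S)
qed

lemma basic_eq_form3:
  assumes "n > 0"
  shows "basic n = smult (psi_num psi n / of_nat n) (xhat psi ((inv S ^^ n) (monom 1 (n - 1))))"
proof -
  let ?c = "psi_num psi n / of_nat n"
  have lin: "lin_op (inv S ^^ n)" by (rule lin_op_pow[OF shift_inv_lin[OF inv_S_shift_inv]])
  have c: "?c * (of_nat n / psi_num psi n) = 1"
    using assms psi_num_nonzero[OF assms] by simp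
  have "xhat psi (monom 1 (n - 1)) = smult (of_nat n / psi_num psi n) (monom 1 n)"
    using assms xhat_monom[of psi "n - 1"] by simp
  then have "pincherle psi (inv S ^^ n) (monom 1 (n - 1))
      = smult (of_nat n / psi_num psi n) ((inv S ^^ n) (monom 1 n))
        - xhat psi ((inv S ^^ n) (monom 1 (n - 1)))"
    unfolding pincherle_def by (simp add: lin_op_smult[OF lin])
  then show ?thesis
    unfolding basic_eq_form2[OF assms] by (simp only: smult_diff_right smult_smult c smult_1_left) simp
qed

lemma basic_at_0:
  assumes "n > 0"
  shows "poly (basic n) 0 = 0"
  unfolding basic_eq_form3[OF assms] by (simp add: poly_0_coeff_0 coeff_xhat)

lemma basic_0: "basic 0 = 1"
proof -
  have "degree (inv S 1) = 0" by (rule shift_inv_const[OF inv_S_shift_inv]) simp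
  then have "degree (pincherle psi S (inv S 1)) = 0"
    by (rule shift_inv_const[OF shift_inv_pincherle[OF adm S]])
  then show ?thesis
    unfolding basic_def by (simp add: pincherle_psi_deriv_comp[OF adm] psi_deriv_eq_0_iff S_inv_S)
qed

lemma basic_recursion:
  assumes "n > 0"
  shows "(D \<circ> S) (basic n) = smult (psi_num psi n) (basic (n - 1))"
proof -
  have Rn: "shift_inv psi (inv S ^^ (n + 1))" by (rule shift_inv_pow[OF inv_S_shift_inv])
  have "(D \<circ> S) (basic n) = pincherle psi (D \<circ> S) ((inv S ^^ (n + 1)) ((D \<circ> S) (monom 1 n)))"
    unfolding basic_def by (simp only: shift_inv_commute[OF Q_shift_inv Q'_shift_inv] shift_inv_commute[OF Q_shift_inv Rn])
  also have "(D \<circ> S) (monom 1 n) = smult (psi_num psi n) (S (monom 1 (n - 1)))"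
    by (simp add: shift_inv_commD[OF S, symmetric] psi_deriv_monom
        lin_op_smult[OF shift_inv_lin[OF S]])
  also have "(inv S ^^ (n + 1)) \<dots> = smult (psi_num psi n) ((inv S ^^ n) (monom 1 (n - 1)))"
    by (simp add: lin_op_smult[OF shift_inv_lin[OF inv_S_shift_inv]] lin_op_smult[OF lin_op_pow[OF shift_inv_lin[OF inv_S_shift_inv]]]
        funpow_Suc_right inv_S_S del: funpow.simps)
  also have "pincherle psi (D \<circ> S) \<dots>
      = smult (psi_num psi n) (pincherle psi (D \<circ> S) ((inv S ^^ n) (monom 1 (n - 1))))"
    by (rule lin_op_smult[OF shift_inv_lin[OF Q'_shift_inv]])
  finally show ?thesis
    using assms by (simp add: basic_def)
qed

lemma kernel_D_comp_S: "D (S r) = 0 \<Longrightarrow> degree r = 0"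
  using shift_inv_const[OF inv_S_shift_inv, of "S r"] by (simp add: psi_deriv_eq_0_iff inv_S_S)

text \<open>Q' 1 = S 1 is a nonzero constant, so Q' is bijective.\<close>

lemma bij_pincherle_Q: "bij (pincherle psi (D \<circ> S))"
proof (rule shift_inv_bij[OF Q'_shift_inv])
  have "degree (pincherle psi S 1) = 0"
    by (rule shift_inv_const[OF shift_inv_pincherle[OF adm S]]) simp
  then have "pincherle psi (D \<circ> S) 1 = S 1"
    by (simp add: pincherle_psi_deriv_comp[OF adm] psi_deriv_eq_0_iff)
  moreover have "S 1 \<noteq> 0"
    using S_bij lin_op_zero[OF shift_inv_lin[OF S]] by (metis bij_is_inj injD one_neq_zero)
  moreover have "degree (S 1) = 0" by (rule shift_inv_const[OF S]) simp
  ultimately show "coeff (pincherle psi (D \<circ> S) 1) 0 \<noteq> 0"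
    by (metis leading_coeff_0_iff)
qed

end

end

lemma psi_basic_seq_unique:
  assumes lin: "lin_op Q" and kernel: "\<And>r. Q r = 0 \<Longrightarrow> degree r = 0"
    and p: "psi_basic_seq psi Q p"
    and q0: "q 0 = 1" and q_at_0: "\<And>n. n > 0 \<Longrightarrow> poly (q n) 0 = 0"
    and q_rec: "\<And>n. n > 0 \<Longrightarrow> Q (q n) = smult (psi_num psi n) (q (n - 1))"
  shows "p n = q n"
proof (induction n)
  case 0
  then show ?case using p q0 unfolding psi_basic_seq_def by simp
next
  case (Suc n)
  let ?r = "p (Suc n) - q (Suc n)"
  have "Q ?r = 0"
    using p q_rec[of "Suc n"] Suc lin_op_diff[OF lin] unfolding psi_basic_seq_def by simp
  then have "degree ?r = 0" by (rule kernel)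
  moreover have "coeff ?r 0 = 0"
    using p q_at_0[of "Suc n"] unfolding psi_basic_seq_def by (simp add: poly_0_coeff_0)
  ultimately show ?case by (metis leading_coeff_0_iff eq_iff_diff_eq_0)
qed

theorem theorem2p1:
  fixes psi :: "nat \<Rightarrow> 'a::field_char_0"
    and Q S :: "'a poly \<Rightarrow> 'a poly"
    and p :: "nat \<Rightarrow> 'a poly"
  assumes "admissible psi"
    and "psi_delta psi Q"
    and "psi_basic_seq psi Q p"
    and "S \<in> Sigma_psi psi" and "bij S"
    and "Q = psi_deriv psi \<circ> S"
  shows "(\<forall>n>0.
      p n = pincherle psi Q ((inv S ^^ (n + 1)) (monom 1 n)) \<and>
      p n = (inv S ^^ n) (monom 1 n)
            - smult (psi_num psi n / of_nat n) (pincherle psi (inv S ^^ n) (monom 1 (n - 1))) \<and>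
      p n = smult (psi_num psi n / of_nat n) (xhat psi ((inv S ^^ n) (monom 1 (n - 1)))))
    \<and> bij (pincherle psi Q)
    \<and> (\<forall>n>0. p n = smult (psi_num psi n / of_nat n)
                       (xhat psi (inv (pincherle psi Q) (p (n - 1)))))"
proof -
  note adm = assms(1) and Q_def = assms(6)
  have S: "shift_inv psi S" by (rule Sigma_shift_inv[OF adm assms(4)])
  note facts = adm S assms(5)
  have p_basic: "p n = basic psi S n" for n
    by (rule psi_basic_seq_unique[OF shift_inv_lin[OF Q_shift_inv[OF facts]]])
      (use assms(3) kernel_D_comp_S[OF facts] basic_0[OF facts] basic_at_0[OF facts]
        basic_recursion[OF facts] Q_def in auto)
  have bij: "bij (pincherle psi Q)"
    unfolding Q_def by (rule bij_pincherle_Q[OF facts])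
  have rodrigues: "inv (pincherle psi Q) (p (n - 1)) = (inv S ^^ n) (monom 1 (n - 1))"
    if "n > 0" for n
    using p_basic[of "n - 1"] that bij by (simp add: basic_def[OF facts] Q_def bij_is_inj)
  show ?thesis
    using p_basic basic_def[OF facts] basic_eq_form2[OF facts] basic_eq_form3[OF facts] bij
      rodrigues Q_def by simp
qed

end
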